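(* Let $1\le k\le n$, $p=c_n^k$, and let $X$ be a real symmetric $n\times n$ matrix with diagonalization $X=Q\Lambda Q^{\intercal}$ ($Q$ orthogonal, $\Lambda$ diagonal). Then for each $i\in[n]$, $$p|_{\{i\}}(X)=X_{ii}\,c_n^{k-1}(\Lambda)-X_i^{\intercal}Q\,\nabla c_n^{k-1}(\Lambda)\,Q^{\intercal}X_i,$$ where $X_i$ is the $i$-th column of $X$.
   Context: $c_n^j(X)=\sum_{S\subseteq[n],|S|=j}\det(X|_S)$ with $X|_S$ the principal submatrix indexed by $S$; $p|_{\{i\}}(X)=\sum_{|S|=k,\,i\in S}\det(X|_S)$. For $f$ a function of an $n\times n$ matrix, $\nabla f$ is the matrix $G$ with $G_{ij}=\frac{\partial f}{\partial X_{ij}}$. *)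

theory Defs
  imports "HOL-Analysis.Analysis"
begin

text \<open>Determinant of the principal submatrix X|_S, written out via the Leibniz
formula (exactly as the library's det unfolds, restricted to the index set S).\<close>
definition principal_minor :: "real^'n^'n \<Rightarrow> 'n set \<Rightarrow> real" where
  "principal_minor X S =
     (\<Sum>p\<in>{p. p permutes S}. of_int (sign p) * (\<Prod>i\<in>S. X $ i $ p i))"

text \<open>c_n^j(X) = sum of the j x j principal minors.\<close>
definition esym_minor :: "nat \<Rightarrow> real^'n^'n \<Rightarrow> real" where
  "esym_minor j X = (\<Sum>S\<in>{S::'n set. card S = j}. principal_minor X S)"

text \<open>p|_{i}(X) for p = c_n^k: sum of k x k principal minors whose index set contains i.\<close>
definition restr_esym_minor :: "nat \<Rightarrow> 'n \<Rightarrow> real^'n^'n \<Rightarrow> real" where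
  "restr_esym_minor k i X = (\<Sum>S\<in>{S::'n set. card S = k \<and> i \<in> S}. principal_minor X S)"

definition ematrix :: "'n \<Rightarrow> 'n \<Rightarrow> real^'n^'n" where
  "ematrix a b = (\<chi> r c. if r = a \<and> c = b then 1 else 0)"

definition mat_grad :: "(real^'n^'n \<Rightarrow> real) \<Rightarrow> real^'n^'n \<Rightarrow> real^'n^'n" where
  "mat_grad f X = (\<chi> a b. deriv (\<lambda>t. f (X + t *\<^sub>R ematrix a b)) 0)"

end

theory Submission
  imports Defs
begin

(* Let P = I - e_i e_i^T. Expanding det (P + t X) as a diagonal matrix plus t X keeps exactly the
   principal minors whose index set contains i: the coefficient of t^j in det (P + t X) is the sum
   of the j x j principal minors of X containing i.
   Conjugating by Q turns P + t X into I + t Lambda minus the rank-one matrix q q^T, where q is the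
   i-th row of Q; the matrix determinant lemma and |q| = 1 give
   det (P + t X) = sum_a q_a^2 lambda_a t prod_{b ~= a} (1 + t lambda_b).
   Comparing the coefficients of t^k yields p|_{i}(X) = sum_a q_a^2 lambda_a e_{k-1}(lambda without a).
   The right-hand side reduces to the same sum, because the gradient of c_n^{k-1} at Lambda is
   diagonal with entries e_{k-2}(lambda without a) and e_{k-1}(lambda) splits as
   e_{k-1}(lambda without a) + lambda_a e_{k-2}(lambda without a). *)

lemma sum_sign_permutes_eq_0:
  assumes "finite S" "a \<in> S" "b \<in> S" "a \<noteq> b"
  shows "(\<Sum>p\<in>{p. p permutes S}. sign p) = 0"
proof -
  let ?\<tau> = "Transposition.transpose a b"
  have "?\<tau> permutes S"
    using assms by (simp add: permutes_swap_id)
  then have "(\<Sum>p\<in>{p. p permutes S}. sign p) = (\<Sum>p\<in>{p. p permutes S}. sign (?\<tau> \<circ> p))"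
    by (rule setum_permutations_compose_left)
  also have "\<dots> = (\<Sum>p\<in>{p. p permutes S}. - sign p)"
  proof (intro sum.cong refl)
    fix p assume "p \<in> {p. p permutes S}"
    then have "permutation p"
      using assms(1) permutation_permutes by blast
    with assms(4) show "sign (?\<tau> \<circ> p) = - sign p"
      by (simp add: sign_compose permutation_swap_id sign_swap_id)
  qed
  finally show ?thesis
    by (simp add: sum_negf)
qed

lemma principal_minor_empty [simp]: "principal_minor M {} = 1"
  by (simp add: principal_minor_def)

lemma principal_minor_singleton [simp]: "principal_minor M {a} = M $ a $ a"
  by (simp add: principal_minor_def)

lemma principal_minor_scaleR:
  "principal_minor (t *\<^sub>R M) S = t ^ card S * principal_minor M S"
proof -
  have "(\<Prod>c\<in>S. t * M $ c $ p c) = t ^ card S * (\<Prod>c\<in>S. M $ c $ p c)" for p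
    by (simp add: prod.distrib)
  then show ?thesis
    by (simp add: principal_minor_def sum_distrib_left mult_ac)
qed

lemma principal_minor_eq_prod_diagonal:
  assumes "\<And>p. p permutes S \<Longrightarrow> p \<noteq> id \<Longrightarrow> (\<Prod>c\<in>S. M $ c $ p c) = 0"
  shows "principal_minor M S = (\<Prod>c\<in>S. M $ c $ c)"
proof -
  have "finite {p. p permutes S}"
    by (simp add: finite_permutations)
  moreover have "(\<Sum>p\<in>{p. p permutes S} - {id}. of_int (sign p) * (\<Prod>c\<in>S. M $ c $ p c)) = 0"
    using assms by (intro sum.neutral) simp
  ultimately have "principal_minor M S = of_int (sign (id :: 'n \<Rightarrow> 'n)) * (\<Prod>c\<in>S. M $ c $ id c)"
    unfolding principal_minor_def by (simp add: sum.remove[of _ id] permutes_id)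
  then show ?thesis
    by simp
qed

lemma principal_minor_diagonal:
  assumes "\<forall>a b. a \<noteq> b \<longrightarrow> M $ a $ b = 0"
  shows "principal_minor M S = (\<Prod>c\<in>S. M $ c $ c)"
proof (rule principal_minor_eq_prod_diagonal)
  fix p assume p: "p permutes S" "p \<noteq> id"
  then obtain c where c: "p c \<noteq> c"
    by (auto simp: fun_eq_iff)
  with p(1) have "c \<in> S"
    by (meson permutes_not_in)
  with c assms show "(\<Prod>c\<in>S. M $ c $ p c) = 0"
    by (intro prod_zero bexI[of _ c]) auto
qed

lemma principal_minor_outer_eq_0:
  fixes u v :: "'n::finite \<Rightarrow> real"
  assumes "2 \<le> card S"
  shows "principal_minor (\<chi> a b. u a * v b) S = 0"
proof -
  obtain a b where ab: "a \<in> S" "b \<in> S" "a \<noteq> b"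
    using assms by (metis card_le_Suc0_iff_eq finite not_less_eq_eq numeral_2_eq_2)
  have "(\<Prod>c\<in>S. u c * v (p c)) = (\<Prod>c\<in>S. u c) * (\<Prod>c\<in>S. v c)" if "p permutes S" for p
    using prod.permute[OF that, of v] by (simp add: prod.distrib o_def)
  then have "principal_minor (\<chi> a b. u a * v b) S =
      (\<Prod>c\<in>S. u c) * (\<Prod>c\<in>S. v c) * (\<Sum>p\<in>{p. p permutes S}. of_int (sign p))"
    by (simp add: principal_minor_def sum_distrib_left mult_ac)
  with ab show ?thesis
    by (simp flip: of_int_sum add: sum_sign_permutes_eq_0)
qed

lemma det_diagonal_add:
  fixes s :: "'n::finite \<Rightarrow> real" and Y :: "real^'n^'n"
  shows "det (\<chi> a b. (if a = b then s a else 0) + Y $ a $ b) =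
    (\<Sum>S\<in>Pow UNIV. (\<Prod>a\<in>UNIV - S. s a) * principal_minor Y S)"
proof -
  let ?D = "\<lambda>a b. if a = b then s a else 0"
  let ?P = "{p. p permutes (UNIV :: 'n set)}"
  let ?term = "\<lambda>S p. of_int (sign p) * (\<Prod>a\<in>S. Y $ a $ p a) * (\<Prod>a\<in>UNIV - S. ?D a (p a))"
  have "det (\<chi> a b. ?D a b + Y $ a $ b) = (\<Sum>p\<in>?P. \<Sum>S\<in>Pow UNIV. ?term S p)"
    unfolding det_def by (simp add: add.commute prod_add sum_distrib_left mult.assoc)
  also have "\<dots> = (\<Sum>S\<in>Pow UNIV. \<Sum>p\<in>?P. ?term S p)"
    by (rule sum.swap)
  also have "\<dots> = (\<Sum>S\<in>Pow UNIV. \<Sum>p\<in>{p. p permutes S}. ?term S p)"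
  proof (rule sum.cong[OF refl])
    fix S :: "'n set"
    have "?term S p = 0" if "p \<in> ?P - {p. p permutes S}" for p
    proof -
      from that obtain a where "a \<notin> S" "p a \<noteq> a"
        by (auto simp: permutes_def)
      then show "?term S p = 0"
        by (auto intro!: prod_zero)
    qed
    then show "(\<Sum>p\<in>?P. ?term S p) = (\<Sum>p\<in>{p. p permutes S}. ?term S p)"
      by (intro sum.mono_neutral_right) (auto simp: finite_permutations intro: permutes_subset)
  qed
  also have "\<dots> = (\<Sum>S\<in>Pow UNIV. (\<Prod>a\<in>UNIV - S. s a) * principal_minor Y S)"
  proof (intro sum.cong refl)
    fix S :: "'n set"
    have "(\<Prod>a\<in>UNIV - S. ?D a (p a)) = (\<Prod>a\<in>UNIV - S. s a)" if "p permutes S" for p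
      using that by (intro prod.cong) (auto simp: permutes_not_in)
    then show "(\<Sum>p\<in>{p. p permutes S}. ?term S p) = (\<Prod>a\<in>UNIV - S. s a) * principal_minor Y S"
      by (simp add: principal_minor_def sum_distrib_left mult_ac)
  qed
  finally show ?thesis .
qed

lemma det_diagonal_add_outer:
  fixes s u v :: "'n::finite \<Rightarrow> real"
  shows "det (\<chi> a b. (if a = b then s a else 0) + u a * v b) =
    (\<Prod>a\<in>UNIV. s a) + (\<Sum>a\<in>UNIV. (\<Prod>b\<in>UNIV - {a}. s b) * (u a * v a))"
proof -
  let ?f = "\<lambda>S. (\<Prod>a\<in>UNIV - S. s a) * principal_minor (\<chi> a b. u a * v b) S"
  have "det (\<chi> a b. (if a = b then s a else 0) + u a * v b) = (\<Sum>S\<in>Pow UNIV. ?f S)"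
    using det_diagonal_add[of s "\<chi> a b. u a * v b"] by simp
  also have "\<dots> = (\<Sum>S\<in>insert {} ((\<lambda>a. {a}) ` UNIV). ?f S)"
  proof (rule sum.mono_neutral_right)
    show "\<forall>S\<in>Pow UNIV - insert {} ((\<lambda>a. {a}) ` UNIV). ?f S = 0"
    proof
      fix S :: "'n set" assume "S \<in> Pow UNIV - insert {} ((\<lambda>a. {a}) ` UNIV)"
      then have "card S \<noteq> 0" "card S \<noteq> 1"
        by (auto simp: card_1_singleton_iff)
      then have "2 \<le> card S"
        by linarith
      then show "?f S = 0"
        by (simp add: principal_minor_outer_eq_0)
    qed
  qed auto
  also have "\<dots> = ?f {} + (\<Sum>a\<in>UNIV. ?f {a})"
    by (subst sum.insert) (auto simp: sum.reindex inj_on_def)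
  finally show ?thesis
    by simp
qed

lemma sum_prod_card_split:
  fixes f :: "'a::finite \<Rightarrow> 'b::comm_semiring_1"
  shows "(\<Sum>T | card T = j. prod f T) =
    (\<Sum>T | card T = j \<and> a \<notin> T. prod f T) + f a * (\<Sum>T | card T = j \<and> a \<in> T. prod f (T - {a}))"
proof -
  have "{T. card T = j} = {T. card T = j \<and> a \<notin> T} \<union> {T. card T = j \<and> a \<in> T}"
    by auto
  then have "(\<Sum>T | card T = j. prod f T) =
      (\<Sum>T | card T = j \<and> a \<notin> T. prod f T) + (\<Sum>T | card T = j \<and> a \<in> T. prod f T)"
    by (simp add: sum.union_disjoint disjoint_iff)
  moreover have "prod f T = f a * prod f (T - {a})" if "a \<in> T" for T
    using that by (simp add: prod.remove)
  ultimately show ?thesis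
    by (simp add: sum_distrib_left)
qed

lemma esym_minor_diagonal:
  assumes "\<forall>a b. a \<noteq> b \<longrightarrow> L $ a $ b = 0"
  shows "esym_minor j L = (\<Sum>T | card T = j. \<Prod>c\<in>T. L $ c $ c)"
  using principal_minor_diagonal[OF assms] by (simp add: esym_minor_def)

lemma principal_minor_diagonal_add_ematrix:
  assumes L: "\<forall>a b. a \<noteq> b \<longrightarrow> L $ a $ b = 0" and "a \<noteq> b"
  shows "principal_minor (L + t *\<^sub>R ematrix a b) T = (\<Prod>c\<in>T. L $ c $ c)"
proof -
  let ?M = "L + t *\<^sub>R ematrix a b"
  have M_nonzero: "c = d \<or> c = a \<and> d = b" if "?M $ c $ d \<noteq> 0" for c d
    using that L by (auto simp: ematrix_def split: if_splits)
  have "principal_minor ?M T = (\<Prod>c\<in>T. ?M $ c $ c)"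
  proof (rule principal_minor_eq_prod_diagonal)
    fix p assume p: "p permutes T" "p \<noteq> id"
    show "(\<Prod>c\<in>T. ?M $ c $ p c) = 0"
    proof (rule ccontr)
      assume "(\<Prod>c\<in>T. ?M $ c $ p c) \<noteq> 0"
      then have nonzero: "?M $ c $ p c \<noteq> 0" if "c \<in> T" for c
        using that by auto
      obtain c where "p c \<noteq> c"
        using p(2) by (auto simp: fun_eq_iff)
      moreover from this p(1) have "c \<in> T"
        by (meson permutes_not_in)
      ultimately have "c = a" "p a = b"
        using M_nonzero[OF nonzero[OF \<open>c \<in> T\<close>]] by auto
      with \<open>c \<in> T\<close> p(1) have "b \<in> T"
        by (metis permutes_in_image)
      have "p b \<noteq> b"
        using \<open>p a = b\<close> \<open>a \<noteq> b\<close> permutes_inj[OF p(1)] by (metis injD)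
      then show False
        using M_nonzero[OF nonzero[OF \<open>b \<in> T\<close>]] \<open>a \<noteq> b\<close> by auto
    qed
  qed
  also have "\<dots> = (\<Prod>c\<in>T. L $ c $ c)"
    using \<open>a \<noteq> b\<close> by (auto simp: ematrix_def intro: prod.cong)
  finally show ?thesis .
qed

lemma mat_grad_esym_minor_diagonal:
  assumes L: "\<forall>a b. a \<noteq> b \<longrightarrow> L $ a $ b = 0"
  shows "mat_grad (esym_minor j) L =
    (\<chi> a b. if a = b then (\<Sum>T | card T = j \<and> a \<in> T. \<Prod>c\<in>T - {a}. L $ c $ c) else 0)"
proof -
  have "deriv (\<lambda>t. esym_minor j (L + t *\<^sub>R ematrix a b)) 0 =
      (if a = b then (\<Sum>T | card T = j \<and> a \<in> T. \<Prod>c\<in>T - {a}. L $ c $ c) else 0)" for a b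
  proof (cases "a = b")
    case False
    then have "(\<lambda>t. esym_minor j (L + t *\<^sub>R ematrix a b)) = (\<lambda>t. esym_minor j L)"
      by (simp add: esym_minor_def principal_minor_diagonal_add_ematrix[OF L]
          principal_minor_diagonal[OF L])
    with False show ?thesis
      by simp
  next
    case True
    let ?E = "\<Sum>T | card T = j \<and> a \<notin> T. \<Prod>c\<in>T. L $ c $ c"
    let ?F = "\<Sum>T | card T = j \<and> a \<in> T. \<Prod>c\<in>T - {a}. L $ c $ c"
    define f where "f t c = L $ c $ c + (if c = a then t else 0)" for t c
    have "esym_minor j (L + t *\<^sub>R ematrix a b) = (\<Sum>T | card T = j. prod (f t) T)" for t
      using L True by (subst esym_minor_diagonal) (auto simp: ematrix_def f_def intro!: sum.cong prod.cong)
    also have "(\<Sum>T | card T = j. prod (f t) T) = ?E + (L $ a $ a + t) * ?F" for t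
      unfolding sum_prod_card_split[of "f t" j a]
      by (auto simp: f_def intro!: sum.cong prod.cong arg_cong2[where f = "(+)"])
    finally have "(\<lambda>t. esym_minor j (L + t *\<^sub>R ematrix a b)) = (\<lambda>t. ?E + (L $ a $ a + t) * ?F)"
      by (rule ext)
    moreover have "deriv (\<lambda>t. ?E + (L $ a $ a + t) * ?F) 0 = ?F"
      by (rule DERIV_imp_deriv) (auto intro!: derivative_eq_intros)
    ultimately show ?thesis
      using True by simp
  qed
  then show ?thesis
    by (simp add: mat_grad_def vec_eq_iff)
qed

lemma sum_group_by_power:
  fixes t :: "'b::comm_semiring_1"
  assumes "finite F" and "\<And>x. x \<in> F \<Longrightarrow> h x \<le> N"
  shows "(\<Sum>x\<in>F. g x * t ^ h x) = (\<Sum>m\<le>N. (\<Sum>x | x \<in> F \<and> h x = m. g x) * t ^ m)"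
proof -
  have "(\<Sum>m\<le>N. (\<Sum>x | x \<in> F \<and> h x = m. g x) * t ^ m) =
      (\<Sum>m\<le>N. \<Sum>x | x \<in> F \<and> h x = m. g x * t ^ h x)"
    by (auto simp: sum_distrib_right intro!: sum.cong)
  also have "\<dots> = (\<Sum>x\<in>F. g x * t ^ h x)"
    using assms by (intro sum.group) auto
  finally show ?thesis ..
qed

lemma prod_one_add_scaled:
  fixes f :: "'a \<Rightarrow> 'b::comm_semiring_1"
  assumes "finite A"
  shows "(\<Prod>b\<in>A. 1 + t * f b) = (\<Sum>T\<in>Pow A. prod f T * t ^ card T)"
  using prod_add[OF assms, of "\<lambda>b. t * f b" "\<lambda>_. 1"]
  by (simp add: add.commute prod.distrib mult.commute)

lemma mult_prod_one_add_scaled_eq_poly: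
  fixes f :: "'a \<Rightarrow> 'b::comm_semiring_1"
  assumes "finite A" and "card A < N"
  shows "t * (\<Prod>b\<in>A. 1 + t * f b) = (\<Sum>m\<le>N. (\<Sum>T | T \<subseteq> A \<and> Suc (card T) = m. prod f T) * t ^ m)"
proof -
  have "t * (\<Prod>b\<in>A. 1 + t * f b) = (\<Sum>T\<in>Pow A. prod f T * t ^ Suc (card T))"
    by (simp add: prod_one_add_scaled[OF assms(1)] sum_distrib_left mult.left_commute)
  also have "\<dots> = (\<Sum>m\<le>N. (\<Sum>T | T \<in> Pow A \<and> Suc (card T) = m. prod f T) * t ^ m)"
  proof (rule sum_group_by_power)
    fix T assume "T \<in> Pow A"
    then have "card T \<le> card A"
      by (simp add: card_mono[OF assms(1)])
    with assms(2) show "Suc (card T) \<le> N"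
      by linarith
  qed (simp add: assms(1))
  finally show ?thesis
    by simp
qed

lemma matrix_add_rdistrib: "((A :: 'a::semiring_1^'n^'m) + B) ** C = A ** C + B ** C"
  by (simp add: matrix_matrix_mult_def vec_eq_iff sum.distrib distrib_right)

lemma matrix_diff_rdistrib: "((A :: 'a::ring_1^'n^'m) - B) ** C = A ** C - B ** C"
  by (simp add: matrix_matrix_mult_def vec_eq_iff sum_subtractf left_diff_distrib)

lemma matrix_diff_ldistrib: "(A :: 'a::ring_1^'n^'m) ** (B - C) = A ** B - A ** C"
  by (simp add: matrix_matrix_mult_def vec_eq_iff sum_subtractf right_diff_distrib)

lemma transpose_mul_ematrix_mul:
  "transpose Q ** ematrix a b ** Q = (\<chi> c d. Q $ a $ c * Q $ b $ d)"
proof -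
  have "transpose Q ** ematrix a b = (\<chi> c d. if d = b then Q $ a $ c else 0)"
    by (auto simp: vec_eq_iff matrix_matrix_mult_def transpose_def ematrix_def if_distrib cong: if_cong)
  then show ?thesis
    by (simp add: vec_eq_iff matrix_matrix_mult_def if_distrib[where f = "\<lambda>x. x * _"] cong: if_cong)
qed

lemma det_orthogonal_conj:
  fixes Q A :: "real^'n^'n"
  assumes "orthogonal_matrix Q"
  shows "det (transpose Q ** A ** Q) = det A"
proof -
  have "det Q * det Q = 1"
    using det_orthogonal_matrix[OF assms] by auto
  then show ?thesis
    by (simp add: det_mul det_transpose)
qed

lemma orthogonal_conj_cancel:
  fixes Q L :: "real^'n^'n"
  assumes "orthogonal_matrix Q"
  shows "transpose Q ** (Q ** L ** transpose Q) = L ** transpose Q"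
    and "transpose Q ** (Q ** L ** transpose Q) ** Q = L"
proof -
  have QtQ: "transpose Q ** Q = mat 1"
    using assms by (simp add: orthogonal_matrix_def)
  have "transpose Q ** (Q ** L ** transpose Q) = (transpose Q ** Q) ** L ** transpose Q"
    by (simp add: matrix_mul_assoc)
  then show "transpose Q ** (Q ** L ** transpose Q) = L ** transpose Q"
    by (simp add: QtQ)
  then show "transpose Q ** (Q ** L ** transpose Q) ** Q = L"
    by (metis QtQ matrix_mul_assoc matrix_mul_rid)
qed

lemma sum_diagonal_delta:
  fixes L :: "'a::semiring_0^'n^'n"
  assumes "\<forall>a b. a \<noteq> b \<longrightarrow> L $ a $ b = 0"
  shows "(\<Sum>k\<in>UNIV. f k * L $ k $ c) = f c * L $ c $ c"
    and "(\<Sum>k\<in>UNIV. L $ r $ k * f k) = L $ r $ r * f r"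
proof -
  have "(\<Sum>k\<in>UNIV. f k * L $ k $ c) = (\<Sum>k\<in>UNIV. if k = c then f c * L $ c $ c else 0)"
    using assms by (intro sum.cong) auto
  then show "(\<Sum>k\<in>UNIV. f k * L $ k $ c) = f c * L $ c $ c"
    by simp
  have "(\<Sum>k\<in>UNIV. L $ r $ k * f k) = (\<Sum>k\<in>UNIV. if k = r then L $ r $ r * f r else 0)"
    using assms by (intro sum.cong) auto
  then show "(\<Sum>k\<in>UNIV. L $ r $ k * f k) = L $ r $ r * f r"
    by simp
qed

lemma matrix_mul_diagonal_right:
  assumes "\<forall>a b. a \<noteq> b \<longrightarrow> L $ a $ b = 0"
  shows "A ** L = (\<chi> r c. A $ r $ c * L $ c $ c)"
  by (simp add: vec_eq_iff matrix_matrix_mult_def sum_diagonal_delta[OF assms])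

lemma matrix_mul_diagonal_left:
  assumes "\<forall>a b. a \<noteq> b \<longrightarrow> L $ a $ b = 0"
  shows "L ** A = (\<chi> r c. L $ r $ r * A $ r $ c)"
  by (simp add: vec_eq_iff matrix_matrix_mult_def sum_diagonal_delta[OF assms])

lemma diagonal_mult_vector:
  assumes "\<forall>a b. a \<noteq> b \<longrightarrow> L $ a $ b = 0"
  shows "L *v x = (\<chi> r. L $ r $ r * x $ r)"
  by (simp add: vec_eq_iff matrix_vector_mult_def sum_diagonal_delta[OF assms])

lemma det_proj_add_scaleR_restr_esym_minor:
  fixes X :: "real^'n^'n"
  shows "det (mat 1 - ematrix i i + t *\<^sub>R X) = (\<Sum>j\<le>CARD('n). restr_esym_minor j i X * t ^ j)"
proof -
  define s where "s a = (if a = i then 0 else 1 :: real)" for a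
  have "mat 1 - ematrix i i + t *\<^sub>R X = (\<chi> a b. (if a = b then s a else 0) + (t *\<^sub>R X) $ a $ b)"
    by (simp add: vec_eq_iff mat_def ematrix_def s_def)
  then have "det (mat 1 - ematrix i i + t *\<^sub>R X) =
      (\<Sum>S\<in>UNIV. (\<Prod>a\<in>UNIV - S. s a) * (principal_minor X S * t ^ card S))"
    using det_diagonal_add[of s "t *\<^sub>R X"] by (simp add: principal_minor_scaleR mult.commute)
  also have "\<dots> = (\<Sum>S | i \<in> S. principal_minor X S * t ^ card S)"
  proof -
    have "(\<Prod>a\<in>UNIV - S. s a) = (if i \<in> S then 1 else 0)" for S
      by (auto simp: s_def intro!: prod_zero prod.neutral)
    then show ?thesis
      by (simp add: sum.inter_filter[symmetric] if_distrib[where f = "\<lambda>x. x * _"] cong: if_cong)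
  qed
  also have "\<dots> = (\<Sum>j\<le>CARD('n). restr_esym_minor j i X * t ^ j)"
    by (subst sum_group_by_power[where N = "CARD('n)"])
      (auto simp: restr_esym_minor_def card_mono intro!: sum.cong Collect_cong)
  finally show ?thesis .
qed

lemma det_proj_add_scaleR_conj_diagonal:
  fixes Q L :: "real^'n^'n"
  assumes Q: "orthogonal_matrix Q" and L: "\<forall>a b. a \<noteq> b \<longrightarrow> L $ a $ b = 0"
  shows "det (mat 1 - ematrix i i + t *\<^sub>R (Q ** L ** transpose Q)) =
    (\<Sum>a\<in>UNIV. (Q $ i $ a)\<^sup>2 * L $ a $ a * t * (\<Prod>b\<in>UNIV - {a}. 1 + t * L $ b $ b))"
proof -
  define q where "q a = Q $ i $ a" for a
  define s where "s a = 1 + t * L $ a $ a" for a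
  have QtQ: "transpose Q ** Q = mat 1"
    using Q by (simp add: orthogonal_matrix_def)
  have conj_linear: "transpose Q ** (mat 1 - B + t *\<^sub>R Y) ** Q =
      transpose Q ** Q - transpose Q ** B ** Q + t *\<^sub>R (transpose Q ** Y ** Q)" for B Y
    by (simp add: matrix_add_ldistrib matrix_diff_ldistrib matrix_add_rdistrib matrix_diff_rdistrib
        matrix_scalar_ac scalar_matrix_assoc)
  have "det (mat 1 - ematrix i i + t *\<^sub>R (Q ** L ** transpose Q)) =
      det (transpose Q ** (mat 1 - ematrix i i + t *\<^sub>R (Q ** L ** transpose Q)) ** Q)"
    by (simp add: det_orthogonal_conj[OF Q])
  also have "\<dots> = det (transpose Q ** Q - transpose Q ** ematrix i i ** Q +
      t *\<^sub>R (transpose Q ** (Q ** L ** transpose Q) ** Q))"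
    by (simp only: conj_linear)
  also have "\<dots> = det (\<chi> a b. (if a = b then s a else 0) + - q a * q b)"
    using L by (intro arg_cong[where f = det])
      (simp add: QtQ orthogonal_conj_cancel(2)[OF Q] transpose_mul_ematrix_mul vec_eq_iff mat_def
        s_def q_def)
  also have "\<dots> = (\<Prod>a\<in>UNIV. s a) - (\<Sum>a\<in>UNIV. (q a)\<^sup>2 * (\<Prod>b\<in>UNIV - {a}. s b))"
    using det_diagonal_add_outer[of s "\<lambda>a. - q a" q] by (simp add: sum_negf power2_eq_square mult_ac)
  also have "(\<Prod>a\<in>UNIV. s a) = (\<Sum>a\<in>UNIV. (q a)\<^sup>2 * s a * (\<Prod>b\<in>UNIV - {a}. s b))"
  proof -
    have "(\<Sum>a\<in>UNIV. (q a)\<^sup>2) = 1"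
      using Q unfolding orthogonal_matrix_def
      by (simp add: vec_eq_iff matrix_matrix_mult_def transpose_def mat_def q_def power2_eq_square)
    then have "(\<Prod>a\<in>UNIV. s a) = (\<Sum>a\<in>UNIV. (q a)\<^sup>2 * (\<Prod>b\<in>UNIV. s b))"
      by (simp flip: sum_distrib_right)
    also have "\<dots> = (\<Sum>a\<in>UNIV. (q a)\<^sup>2 * s a * (\<Prod>b\<in>UNIV - {a}. s b))"
      by (intro sum.cong refl) (metis finite UNIV_I mult.assoc prod.remove)
    finally show ?thesis .
  qed
  finally show ?thesis
    by (simp add: s_def q_def sum_subtractf[symmetric] algebra_simps)
qed

lemma restr_esym_minor_conj_diagonal:
  fixes Q L :: "real^'n^'n"
  assumes "orthogonal_matrix Q" and "\<forall>a b. a \<noteq> b \<longrightarrow> L $ a $ b = 0"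
    and "1 \<le> k" and "k \<le> CARD('n)"
  shows "restr_esym_minor k i (Q ** L ** transpose Q) =
    (\<Sum>a\<in>UNIV. (Q $ i $ a)\<^sup>2 * L $ a $ a * (\<Sum>T | card T = k - 1 \<and> a \<notin> T. \<Prod>c\<in>T. L $ c $ c))"
proof -
  define n where "n = CARD('n)"
  define w where "w a = (Q $ i $ a)\<^sup>2 * L $ a $ a" for a
  define e where "e a m = (\<Sum>T | T \<subseteq> UNIV - {a} \<and> Suc (card T) = m. \<Prod>c\<in>T. L $ c $ c)" for a m
  have e_expansion: "t * (\<Prod>b\<in>UNIV - {a}. 1 + t * L $ b $ b) = (\<Sum>m\<le>n. e a m * t ^ m)" for a t
    unfolding e_def n_def by (rule mult_prod_one_add_scaled_eq_poly) (simp, rule psubset_card_mono, auto)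
  then have "(\<Sum>j\<le>n. restr_esym_minor j i (Q ** L ** transpose Q) * t ^ j) =
      (\<Sum>m\<le>n. (\<Sum>a\<in>UNIV. w a * e a m) * t ^ m)" for t
  proof -
    have "(\<Sum>j\<le>n. restr_esym_minor j i (Q ** L ** transpose Q) * t ^ j) =
        (\<Sum>a\<in>UNIV. w a * (t * (\<Prod>b\<in>UNIV - {a}. 1 + t * L $ b $ b)))"
      using det_proj_add_scaleR_restr_esym_minor[of i t]
        det_proj_add_scaleR_conj_diagonal[OF assms(1,2), of i t]
      by (simp add: n_def w_def mult_ac)
    also have "\<dots> = (\<Sum>a\<in>UNIV. \<Sum>m\<le>n. w a * e a m * t ^ m)"
      by (simp add: e_expansion sum_distrib_left mult.assoc)
    also have "\<dots> = (\<Sum>m\<le>n. \<Sum>a\<in>UNIV. w a * e a m * t ^ m)"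
      by (rule sum.swap)
    finally show ?thesis
      by (simp add: sum_distrib_right)
  qed
  then have "\<forall>j\<le>n. restr_esym_minor j i (Q ** L ** transpose Q) = (\<Sum>a\<in>UNIV. w a * e a j)"
    by (subst polyfun_eq_coeffs[symmetric]) blast
  then have "restr_esym_minor k i (Q ** L ** transpose Q) = (\<Sum>a\<in>UNIV. w a * e a k)"
    using assms(4) by (simp add: n_def)
  moreover have "e a k = (\<Sum>T | card T = k - 1 \<and> a \<notin> T. \<Prod>c\<in>T. L $ c $ c)" for a
  proof -
    have "(T \<subseteq> UNIV - {a} \<and> Suc (card T) = k) \<longleftrightarrow> (card T = k - 1 \<and> a \<notin> T)" for T
      using assms(3) by auto
    then show ?thesis
      unfolding e_def by simp
  qed
  ultimately show ?thesis
    by (simp add: w_def)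
qed

lemma conj_diagonal_nth:
  assumes "\<forall>a b. a \<noteq> b \<longrightarrow> L $ a $ b = 0"
  shows "(Q ** L ** transpose Q) $ i $ j = (\<Sum>a\<in>UNIV. Q $ i $ a * L $ a $ a * Q $ j $ a)"
  unfolding matrix_mul_diagonal_right[OF assms] by (simp add: matrix_matrix_mult_def transpose_def)

lemma transpose_mul_column_conj_diagonal:
  fixes Q L :: "real^'n^'n"
  assumes "orthogonal_matrix Q" and "\<forall>a b. a \<noteq> b \<longrightarrow> L $ a $ b = 0"
  shows "transpose Q *v column i (Q ** L ** transpose Q) = (\<chi> a. L $ a $ a * Q $ i $ a)"
proof -
  have "transpose Q *v column i (Q ** L ** transpose Q) = column i (transpose Q ** (Q ** L ** transpose Q))"
    by (simp add: vec_eq_iff matrix_vector_mult_def matrix_matrix_mult_def column_def transpose_def)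
  also have "\<dots> = column i (L ** transpose Q)"
    by (simp only: orthogonal_conj_cancel(1)[OF assms(1)])
  finally show ?thesis
    by (simp add: matrix_mul_diagonal_left[OF assms(2)] column_def transpose_def)
qed

lemma inner_conj_diagonal:
  fixes Q :: "real^'n^'n"
  shows "x \<bullet> ((Q ** (\<chi> a b. if a = b then d a else 0) ** transpose Q) *v x) =
    (\<Sum>a\<in>UNIV. ((transpose Q *v x) $ a)\<^sup>2 * d a)"
proof -
  let ?D = "(\<chi> a b. if a = b then d a else 0) :: real^'n^'n"
  have "x \<bullet> ((Q ** ?D ** transpose Q) *v x) = (transpose Q *v x) \<bullet> (?D *v (transpose Q *v x))"
    by (simp add: dot_lmul_matrix matrix_vector_mul_assoc[symmetric])
  then show ?thesis
    by (simp add: diagonal_mult_vector inner_vec_def power2_eq_square mult_ac)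
qed

theorem mainTheorem13:
  fixes X Q L :: "real^'n^'n" and k :: nat and i :: 'n
  assumes "1 \<le> k" and "k \<le> CARD('n)"
    and "transpose X = X"
    and "orthogonal_matrix Q"
    and "\<forall>a b. a \<noteq> b \<longrightarrow> L $ a $ b = 0"
    and "X = Q ** L ** transpose Q"
  shows "restr_esym_minor k i X =
           X $ i $ i * esym_minor (k - 1) L
           - column i X \<bullet> ((Q ** mat_grad (esym_minor (k - 1)) L ** transpose Q) *v column i X)"
proof -
  define lam where "lam a = L $ a $ a" for a
  define q where "q a = Q $ i $ a" for a
  define E where "E a = (\<Sum>T | card T = k - 1 \<and> a \<notin> T. \<Prod>c\<in>T. lam c)" for a
  define F where "F a = (\<Sum>T | card T = k - 1 \<and> a \<in> T. \<Prod>c\<in>T - {a}. lam c)" for a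
  have "restr_esym_minor k i X = (\<Sum>a\<in>UNIV. (q a)\<^sup>2 * lam a * E a)"
    using restr_esym_minor_conj_diagonal[OF assms(4,5,1,2)] by (simp add: assms(6) q_def lam_def E_def)
  moreover have "X $ i $ i = (\<Sum>a\<in>UNIV. (q a)\<^sup>2 * lam a)"
    unfolding assms(6) conj_diagonal_nth[OF assms(5)] by (simp add: q_def lam_def power2_eq_square mult_ac)
  moreover have "column i X \<bullet> ((Q ** mat_grad (esym_minor (k - 1)) L ** transpose Q) *v column i X) =
      (\<Sum>a\<in>UNIV. (lam a * q a)\<^sup>2 * F a)"
    unfolding mat_grad_esym_minor_diagonal[OF assms(5)] inner_conj_diagonal assms(6)
      transpose_mul_column_conj_diagonal[OF assms(4,5)]
    by (simp add: lam_def q_def F_def)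
  moreover have "E a = esym_minor (k - 1) L - lam a * F a" for a
    using esym_minor_diagonal[OF assms(5)] sum_prod_card_split[of lam "k - 1" a]
    by (simp add: E_def F_def lam_def)
  ultimately show ?thesis
    by (simp add: right_diff_distrib sum_subtractf sum_distrib_left sum_distrib_right power2_eq_square
        mult_ac)
qed

end
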